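(* For all pure states $\rho,\omega\in\mathcal{P}_1(\mathbb{C}^2)$ one has $D_{\mathrm{sym}}^2(\rho,\omega)=6-2\langle\mathbf{b}_\rho,\mathbf{b}_\omega\rangle$, $D_{\mathrm{sym}}^2(\rho,\rho)=4$, and consequently $d_{\mathrm{sym}}(\rho,\omega)=|\mathbf{b}_\rho-\mathbf{b}_\omega|$, where $\langle\cdot,\cdot\rangle$ and $|\cdot|$ are the Euclidean inner product and norm on $\mathbb{R}^3$.
   Context: Let $\mathcal{H}=\mathbb{C}^2$, $\mathcal{H}^*$ its dual space. $\mathcal{S}(\mathcal{H})$ is the set of density operators on $\mathcal{H}$; $\mathcal{P}_1(\mathcal{H})$ is the set of pure states (rank-one orthogonal projections). For a linear operator $A$ on $\mathcal{H}$, its transpose $A^T$ is the operator on $\mathcal{H}^*$ defined by $(A^T\varphi)(x)=\varphi(Ax)$. For $\rho,\omega\in\mathcal{S}(\mathcal{H})$, $\mathcal{C}(\rho,\omega)=\{\Pi\in\mathcal{S}(\mathcal{H}\otimes\mathcal{H}^* ):\ \mathrm{tr}_{\mathcal{H}^*}[\Pi]=\omega,\ \mathrm{tr}_{\mathcal{H}}[\Pi]=\rho^T\}$. The Pauli matrices are $\sigma_1=\begin{bmatrix}0&1\\1&0\end{bmatrix}$, $\sigma_2=\begin{bmatrix}0&-i\\i&0\end{bmatrix}$, $\sigma_3=\begin{bmatrix}1&0\\0&-1\end{bmatrix}$. $C_{\mathrm{sym}}=\sum_{j=1}^3(\sigma_j\otimes I^T-I\otimes\sigma_j^T)^2$, $D_{\mathrm{sym}}^2(\rho,\omega)=\inf\{\mathrm{tr}[\Pi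 C_{\mathrm{sym}}]:\Pi\in\mathcal{C}(\rho,\omega)\}$, and $d_{\mathrm{sym}}(\rho,\omega)=\big(D_{\mathrm{sym}}^2(\rho,\omega)-\tfrac12(D_{\mathrm{sym}}^2(\rho,\rho)+D_{\mathrm{sym}}^2(\omega,\omega))\big)^{1/2}$. The Bloch vector of $\rho$ is $\mathbf{b}_\rho=(\mathrm{tr}[\sigma_j\rho])_{j=1}^3$. *)

theory Defs
  imports "HOL-Analysis.Analysis"
begin

text \<open>The dual space H* is identified with C^2 via the dual basis; then the
  transpose A^T (defined by (A^T phi)(x) = phi(A x)) has as matrix the
  ordinary matrix transpose.  Operators on H (x) H* are matrices indexed by
  the product type 2 x 2 (basis e_i (x) e_k^*).\<close>

type_synonym op2 = "complex^2^2"
type_synonym op4 = "complex^(2 \<times> 2)^(2 \<times> 2)"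

definition adj :: "complex^'n^'n \<Rightarrow> complex^'n^'n" where
  "adj A = (\<chi> i j. cnj (A $ j $ i))"

definition psd :: "complex^'n^'n \<Rightarrow> bool" where
  "psd A \<longleftrightarrow> (\<forall>v::complex^'n.
      let q = (\<Sum>i\<in>UNIV. \<Sum>j\<in>UNIV. cnj (v $ i) * A $ i $ j * v $ j)
      in Im q = 0 \<and> Re q \<ge> 0)"

definition density :: "complex^'n^'n \<Rightarrow> bool" where
  "density A \<longleftrightarrow> adj A = A \<and> psd A \<and> trace A = 1"

definition pure_state :: "op2 \<Rightarrow> bool" where
  "pure_state P \<longleftrightarrow> adj P = P \<and> P ** P = P \<and> rank P = 1"

definition kron :: "complex^'a^'a \<Rightarrow> complex^'b^'b \<Rightarrow> complex^('a \<times> 'b)^('a \<times> 'b)" where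
  "kron A B = (\<chi> p q. A $ fst p $ fst q * B $ snd p $ snd q)"

text \<open>Partial traces: over H* (second factor) and over H (first factor).\<close>
definition ptrace2 :: "op4 \<Rightarrow> op2" where
  "ptrace2 M = (\<chi> i j. \<Sum>k\<in>UNIV. M $ (i, k) $ (j, k))"

definition ptrace1 :: "op4 \<Rightarrow> op2" where
  "ptrace1 M = (\<chi> k l. \<Sum>i\<in>UNIV. M $ (i, k) $ (i, l))"

definition couplings :: "op2 \<Rightarrow> op2 \<Rightarrow> op4 set" where
  "couplings \<rho> \<omega> = {P. density P \<and> ptrace2 P = \<omega> \<and> ptrace1 P = transpose \<rho>}"

definition pauli :: "nat \<Rightarrow> op2" where
  "pauli j = (if j = 1 then (\<chi> i k. if i = k then 0 else 1)
              else if j = 2 then (\<chi> i k. if i = k then 0 else if i = 1 then - \<i> else \<i>)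
              else (\<chi> i k. if i \<noteq> k then 0 else if i = 1 then 1 else -1))"

definition Csym :: op4 where
  "Csym = (\<Sum>j\<in>{1,2,3::nat}.
      (let X = kron (pauli j) (transpose (mat 1)) - kron (mat 1) (transpose (pauli j)) in X ** X))"

definition Dsym2 :: "op2 \<Rightarrow> op2 \<Rightarrow> real" where
  "Dsym2 \<rho> \<omega> = Inf ((\<lambda>P. Re (trace (P ** Csym))) ` couplings \<rho> \<omega>)"

definition dsym :: "op2 \<Rightarrow> op2 \<Rightarrow> real" where
  "dsym \<rho> \<omega> = sqrt (Dsym2 \<rho> \<omega> - (Dsym2 \<rho> \<rho> + Dsym2 \<omega> \<omega>) / 2)"

definition bloch :: "op2 \<Rightarrow> real^3" where
  "bloch \<rho> = (\<chi> j. Re (trace (pauli (if j = 1 then 1 else if j = 2 then 2 else 3) ** \<rho>)))"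

end

theory Submission
  imports Defs
begin

text \<open>A pure state is an outer product \<open>|u\<rangle>\<langle>u|\<close> of a unit vector. A coupling \<open>\<Pi>\<close> of two
  pure states \<open>\<rho>, \<omega>\<close> is positive and, by its marginal conditions, has zero trace against the
  projections \<open>(1 - \<omega>) \<otimes> 1\<close> and \<open>1 \<otimes> (1 - \<rho>\<^sup>T)\<close>; hence it annihilates them and lives on
  the one-dimensional range of \<open>\<omega> \<otimes> \<rho>\<^sup>T\<close>. So \<open>\<omega> \<otimes> \<rho>\<^sup>T\<close> is the only coupling and the
  infimum is an explicit trace. Entrywise \<open>C\<^sub>s\<^sub>y\<^sub>m\<close> is \<open>8 I - 4 |\<Omega>\<rangle>\<langle>\<Omega>|\<close>, which
  gives \<open>tr[(A \<otimes> B\<^sup>T) C\<^sub>s\<^sub>y\<^sub>m] = 8 tr A tr B - 4 tr(AB)\<close>, while for Hermitian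
  \<open>2 \<times> 2\<close> matrices \<open>\<langle>b\<^sub>A, b\<^sub>B\<rangle> = 2 tr(AB) - tr A tr B\<close>. For pure states
  (\<open>tr \<rho> = 1\<close>, \<open>\<rho>\<^sup>2 = \<rho>\<close>) everything reduces to Bloch vectors of unit length.\<close>

lemma sum_UNIV_prod: "(\<Sum>p\<in>UNIV. f p) = (\<Sum>i\<in>UNIV. \<Sum>j\<in>UNIV. f (i, j))"
  by (simp add: sum.cartesian_product)

lemma sum_mult_cnj_eq_norm:
  "(\<Sum>i\<in>UNIV. u $ i * cnj (u $ i)) = of_real ((norm (u::complex^'n))\<^sup>2)"
  by (simp add: norm_vec_def L2_set_def sum_nonneg flip: complex_norm_square)

lemma matrix_mul_diff_left: "(A::'a::ring_1^'n^'m) ** (B - C) = A ** B - A ** C"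
  by (simp add: matrix_matrix_mult_def vec_eq_iff sum_subtractf algebra_simps)

lemma matrix_mul_diff_right: "((A::'a::ring_1^'n^'m) - B) ** C = A ** C - B ** C"
  by (simp add: matrix_matrix_mult_def vec_eq_iff sum_subtractf algebra_simps)

lemma idempotent_complement:
  "(W::'a::ring_1^'n^'n) ** W = W \<Longrightarrow> (mat 1 - W) ** (mat 1 - W) = mat 1 - W"
  by (simp add: matrix_mul_diff_left matrix_mul_diff_right)

lemma adj_entry: assumes "adj A = A" shows "A $ i $ j = cnj (A $ j $ i)"
  using arg_cong[OF assms, of "\<lambda>M. M $ i $ j"] by (simp add: adj_def)

lemma adj_mult: "adj ((A::complex^'n^'n) ** B) = adj B ** adj A"
  by (simp add: adj_def matrix_matrix_mult_def vec_eq_iff mult.commute)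

lemma adj_mat1: "adj (mat 1 :: complex^'n^'n) = mat 1"
  by (simp add: adj_def mat_def vec_eq_iff)

lemma adj_diff: "adj (A - B) = adj A - adj B"
  by (simp add: adj_def vec_eq_iff)

lemma adj_kron: "adj (kron A B) = kron (adj A) (adj B)"
  by (simp add: adj_def kron_def vec_eq_iff)

lemma kron_diff_left: "kron (A - B) C = kron A C - kron B C"
  by (simp add: kron_def vec_eq_iff algebra_simps)

lemma kron_diff_right: "kron A (B - C) = kron A B - kron A C"
  by (simp add: kron_def vec_eq_iff algebra_simps)

lemma kron_mat1: "kron (mat 1) (mat 1) = mat 1"
  by (simp add: kron_def mat_def vec_eq_iff prod_eq_iff)

lemma kron_mult:
  fixes A C :: "complex^'a^'a" and B D :: "complex^'b^'b"
  shows "kron A B ** kron C D = kron (A ** C) (B ** D)"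
  by (simp add: kron_def matrix_matrix_mult_def vec_eq_iff sum_UNIV_prod sum_product mult_ac)

lemma trace_kron: "trace (kron A B) = trace A * trace B"
  by (simp add: trace_def kron_def sum_UNIV_prod sum_product)

lemma ptrace2_kron: "ptrace2 (kron A B) = (\<chi> i j. A $ i $ j * trace B)"
  by (simp add: ptrace2_def kron_def trace_def vec_eq_iff sum_distrib_left)

lemma ptrace1_kron: "ptrace1 (kron A B) = (\<chi> i j. trace A * B $ i $ j)"
  by (simp add: ptrace1_def kron_def trace_def vec_eq_iff sum_distrib_right)

lemma trace_mult_kron_mat1_left: "trace (P ** kron Q (mat 1)) = trace (ptrace2 P ** Q)"
  by (simp add: trace_def kron_def matrix_matrix_mult_def ptrace2_def mat_def sum_UNIV_prod sum_2
      algebra_simps)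

lemma trace_mult_kron_mat1_right: "trace (P ** kron (mat 1) Q) = trace (ptrace1 P ** Q)"
  by (simp add: trace_def kron_def matrix_matrix_mult_def ptrace1_def mat_def sum_UNIV_prod sum_2
      algebra_simps)

definition outer :: "complex^'n \<Rightarrow> complex^'n^'n" where
  "outer u = (\<chi> i j. u $ i * cnj (u $ j))"

lemma adj_outer: "adj (outer u) = outer u"
  by (simp add: adj_def outer_def vec_eq_iff mult.commute)

lemma transpose_outer: "transpose (outer u) = outer (\<chi> i. cnj (u $ i))"
  by (simp add: transpose_def outer_def vec_eq_iff mult.commute)

lemma kron_outer: "kron (outer u) (outer v) = outer (\<chi> p. u $ fst p * v $ snd p)"
  by (simp add: kron_def outer_def vec_eq_iff mult_ac)

lemma trace_outer: "trace (outer u) = of_real ((norm u)\<^sup>2)"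
  by (simp add: trace_def outer_def sum_mult_cnj_eq_norm)

lemma trace_outer_eq_1_iff: "trace (outer u) = 1 \<longleftrightarrow> norm u = 1"
  unfolding trace_outer of_real_eq_1_iff by (smt (verit) norm_ge_zero power2_eq_1_iff)

lemma idempotent_outer:
  assumes "norm u = 1" shows "outer u ** outer u = outer u"
proof -
  have "(outer u ** outer u) $ i $ j = (\<Sum>k\<in>UNIV. u $ k * cnj (u $ k)) * outer u $ i $ j" for i j
    by (simp add: outer_def matrix_matrix_mult_def sum_distrib_left mult_ac)
  then show ?thesis using assms by (simp add: vec_eq_iff sum_mult_cnj_eq_norm)
qed

subsection \<open>Positive semidefinite matrices\<close>

definition sesq :: "complex^'n^'n \<Rightarrow> complex^'n \<Rightarrow> complex^'n \<Rightarrow> complex" where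
  "sesq P v w = (\<Sum>i\<in>UNIV. \<Sum>j\<in>UNIV. cnj (v $ i) * P $ i $ j * w $ j)"

lemma psd_iff_sesq: "psd P \<longleftrightarrow> (\<forall>v. Im (sesq P v v) = 0 \<and> Re (sesq P v v) \<ge> 0)"
  unfolding psd_def sesq_def Let_def ..

lemma sesq_outer:
  "sesq (outer u) v w = (\<Sum>i\<in>UNIV. cnj (v $ i) * u $ i) * (\<Sum>j\<in>UNIV. cnj (u $ j) * w $ j)"
  by (simp add: sesq_def outer_def sum_product mult_ac)

lemma psd_outer: "psd (outer u)"
proof -
  have "sesq (outer u) v v = of_real ((cmod (\<Sum>i\<in>UNIV. cnj (v $ i) * u $ i))\<^sup>2)" for v
    unfolding complex_norm_square by (simp add: sesq_outer cnj_sum mult.commute)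
  then show ?thesis by (simp add: psd_iff_sesq)
qed

lemma outer_mult_mult_outer: "outer y ** P ** outer y = (\<chi> i j. sesq P y y * outer y $ i $ j)"
  by (simp add: outer_def matrix_matrix_mult_def sesq_def vec_eq_iff sum_distrib_left
      sum_distrib_right mult_ac) (rule allI sum.swap)+

lemma sesq_diff_scale:
  "sesq P (x - of_real t *s y) (x - of_real t *s y) = sesq P x x - of_real t * sesq P x y
     - of_real t * sesq P y x + of_real t * of_real t * sesq P y y"
  unfolding sesq_def by (simp add: algebra_simps sum.distrib sum_subtractf sum_distrib_left)

lemma sesq_swap: assumes "adj P = P" shows "sesq P x y = cnj (sesq P y x)"
proof -
  have "cnj (sesq P y x) = (\<Sum>i\<in>UNIV. \<Sum>j\<in>UNIV. y $ i * P $ j $ i * cnj (x $ j))"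
    unfolding sesq_def cnj_sum by (simp flip: adj_entry[OF assms])
  also have "\<dots> = sesq P x y"
    unfolding sesq_def by (subst sum.swap) (simp add: mult_ac)
  finally show ?thesis by simp
qed

lemma sesq_mult_vec: "sesq P (P *v x) x = of_real ((norm (P *v x))\<^sup>2)"
proof -
  have "sesq P y x = (\<Sum>i\<in>UNIV. cnj (y $ i) * (P *v x) $ i)" for y
    by (simp add: sesq_def matrix_vector_mult_def sum_distrib_left mult.assoc)
  then show ?thesis unfolding sum_mult_cnj_eq_norm[symmetric] by (simp add: mult.commute)
qed

text \<open>A positive semidefinite form vanishing at \<open>x\<close> has \<open>x\<close> in its kernel: expanding
  \<open>0 \<le> \<langle>x - t P x, P (x - t P x)\<rangle>\<close> gives \<open>0 \<le> t\<^sup>2 \<langle>P x, P P x\<rangle> - 2 t |P x|\<^sup>2\<close> for all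
  real \<open>t\<close>.\<close>
lemma psd_mult_vec_eq_0:
  assumes herm: "adj P = P" and "psd P" and x: "sesq P x x = 0"
  shows "P *v x = 0"
proof -
  define y where "y = P *v x"
  define c where "c = (norm y)\<^sup>2"
  define Q where "Q = Re (sesq P y y)"
  have yx: "sesq P y x = of_real c" unfolding y_def c_def by (rule sesq_mult_vec)
  have xy: "sesq P x y = of_real c" using sesq_swap[OF herm, of x y] yx by simp
  have "Im (sesq P y y) = 0" and Q: "Q \<ge> 0"
    using \<open>psd P\<close> unfolding psd_iff_sesq Q_def by auto
  then have yy: "sesq P y y = of_real Q" unfolding Q_def by (simp add: complex_eq_iff)
  have ineq: "0 \<le> t * t * Q - 2 * t * c" for t
  proof -
    have "0 \<le> Re (sesq P (x - of_real t *s y) (x - of_real t *s y))"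
      using \<open>psd P\<close> unfolding psd_iff_sesq by blast
    then show ?thesis unfolding sesq_diff_scale x xy yx yy by (simp add: algebra_simps)
  qed
  define t where "t = c / (Q + 1)"
  have c: "c = t * (Q + 1)" using Q by (simp add: t_def)
  have "0 \<le> - (t * t) * (Q + 2)"
    using ineq[of t] unfolding c by (simp add: algebra_simps)
  with Q have "t * t \<le> 0" by (simp add: mult_le_0_iff)
  then have "c = 0" using c by (simp add: mult_le_0_iff) linarith
  then show ?thesis unfolding y_def c_def by simp
qed

lemma psd_mult_projection_eq_0:
  assumes herm: "adj P = P" and psd: "psd P" and "adj K = K" and "K ** K = K"
    and trace: "trace (P ** K) = 0"
  shows "P ** K = 0"
proof -
  define x where "x p = (\<chi> i. K $ i $ p)" for p
  have sesq_column: "sesq P (x p) (x p) = (K ** P ** K) $ p $ p" for p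
    unfolding sesq_def x_def
    by (simp add: matrix_matrix_mult_def sum_distrib_right adj_entry[OF \<open>adj K = K\<close>, of _ p])
      (subst sum.swap, simp)
  have "(\<Sum>p\<in>UNIV. sesq P (x p) (x p)) = trace (K ** P ** K)"
    by (simp add: sesq_column trace_def)
  also have "\<dots> = trace (K ** (K ** P))" by (rule trace_mul_sym)
  also have "\<dots> = trace (P ** K)"
    by (simp add: matrix_mul_assoc \<open>K ** K = K\<close> trace_mul_sym[of K P])
  also have "\<dots> = 0" by (rule trace)
  finally have "(\<Sum>p\<in>UNIV. Re (sesq P (x p) (x p))) = 0"
    by (metis Re_sum zero_complex.simps(1))
  then have "Re (sesq P (x p) (x p)) = 0" for p
    using psd by (subst (asm) sum_nonneg_eq_0_iff) (auto simp: psd_iff_sesq)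
  then have "sesq P (x p) (x p) = 0" for p
    using psd by (simp add: psd_iff_sesq complex_eq_iff)
  then have "P *v x p = 0" for p by (rule psd_mult_vec_eq_0[OF herm psd])
  then show ?thesis
    unfolding vec_eq_iff by (auto simp: matrix_matrix_mult_def matrix_vector_mult_def x_def)
qed

subsection \<open>Couplings of pure states\<close>

lemma psd_mult_kron_ptrace2:
  assumes herm: "adj P = P" and psd: "psd P"
    and W: "ptrace2 P = W" "adj W = W" "W ** W = W"
  shows "P ** kron W (mat 1) = P"
proof -
  define K where "K = kron (mat 1 - W) (mat 1 :: op2)"
  have "P ** K = 0"
  proof (rule psd_mult_projection_eq_0[OF herm psd])
    show "adj K = K" unfolding K_def adj_kron adj_diff adj_mat1 W(2) ..
    show "K ** K = K" unfolding K_def by (simp add: kron_mult idempotent_complement[OF W(3)])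
    show "trace (P ** K) = 0"
      unfolding K_def trace_mult_kron_mat1_left W(1)
      by (simp add: matrix_mul_diff_left W(3) trace_0[unfolded mat_0])
  qed
  moreover have "kron W (mat 1) = mat 1 - K" unfolding K_def kron_diff_left kron_mat1 by simp
  ultimately show ?thesis by (simp add: matrix_mul_diff_left)
qed

lemma psd_mult_kron_ptrace1:
  assumes herm: "adj P = P" and psd: "psd P"
    and S: "ptrace1 P = S" "adj S = S" "S ** S = S"
  shows "P ** kron (mat 1) S = P"
proof -
  define K where "K = kron (mat 1 :: op2) (mat 1 - S)"
  have "P ** K = 0"
  proof (rule psd_mult_projection_eq_0[OF herm psd])
    show "adj K = K" unfolding K_def adj_kron adj_diff adj_mat1 S(2) ..
    show "K ** K = K" unfolding K_def by (simp add: kron_mult idempotent_complement[OF S(3)])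
    show "trace (P ** K) = 0"
      unfolding K_def trace_mult_kron_mat1_right S(1)
      by (simp add: matrix_mul_diff_left S(3) trace_0[unfolded mat_0])
  qed
  moreover have "kron (mat 1) S = mat 1 - K" unfolding K_def kron_diff_right kron_mat1 by simp
  ultimately show ?thesis by (simp add: matrix_mul_diff_left)
qed

lemma eq_outer_if_mult_outer:
  assumes herm: "adj P = P" and "trace P = 1" and "norm y = 1" and PR: "P ** outer y = P"
  shows "P = outer y"
proof -
  have "outer y ** P = P"
    using arg_cong[OF PR, of adj] by (simp add: adj_mult adj_outer herm)
  then have "P = outer y ** P ** outer y" using PR by (simp add: matrix_mul_assoc)
  also have "\<dots> = (\<chi> i j. sesq P y y * outer y $ i $ j)" by (rule outer_mult_mult_outer)
  finally have P: "P = (\<chi> i j. sesq P y y * outer y $ i $ j)" .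
  have "trace P = sesq P y y * trace (outer y)"
    by (subst P) (simp add: trace_def sum_distrib_left)
  then have "sesq P y y = 1" using assms by (simp add: trace_outer)
  with P show ?thesis by (simp add: vec_eq_iff)
qed

lemma couplings_outer:
  assumes u: "norm u = 1" and v: "norm v = 1"
  shows "couplings (outer v) (outer u) = {kron (outer u) (transpose (outer v))}"
proof -
  define v' where "v' = (\<chi> i. cnj (v $ i))"
  have v'_outer: "transpose (outer v) = outer v'" unfolding v'_def by (rule transpose_outer)
  have v': "norm v' = 1" using v by (simp add: v'_def norm_vec_def)
  define y where "y = (\<chi> p. u $ fst p * v' $ snd p)"
  have y_outer: "kron (outer u) (outer v') = outer y" unfolding y_def by (rule kron_outer)
  have "trace (outer y) = 1"
    using trace_kron[of "outer u" "outer v'"] u v' by (simp add: y_outer trace_outer)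
  then have y: "norm y = 1" by (simp add: trace_outer_eq_1_iff)
  have "P = outer y" if "P \<in> couplings (outer v) (outer u)" for P
  proof (rule eq_outer_if_mult_outer[OF _ _ y])
    have herm: "adj P = P" and psd: "psd P" and "trace P = 1"
      and "ptrace2 P = outer u" "ptrace1 P = outer v'"
      using that unfolding couplings_def density_def v'_outer by auto
    then show "adj P = P" "trace P = 1" by auto
    have "P ** kron (outer u) (mat 1) = P"
      by (rule psd_mult_kron_ptrace2[OF herm psd]) 
        (auto simp: \<open>ptrace2 P = _\<close> adj_outer idempotent_outer u)
    moreover have "P ** kron (mat 1) (outer v') = P"
      by (rule psd_mult_kron_ptrace1[OF herm psd]) 
        (auto simp: \<open>ptrace1 P = _\<close> adj_outer idempotent_outer v')
    moreover have "outer y = kron (outer u) (mat 1) ** kron (mat 1) (outer v')"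
      by (simp add: kron_mult flip: y_outer)
    ultimately show "P ** outer y = P" by (simp add: matrix_mul_assoc)
  qed
  moreover have "outer y \<in> couplings (outer v) (outer u)"
  proof -
    have "ptrace2 (outer y) = outer u" "ptrace1 (outer y) = outer v'"
      using u v' by (simp_all add: ptrace2_kron ptrace1_kron trace_outer vec_eq_iff flip: y_outer)
    moreover have "density (outer y)"
      using y by (simp add: density_def adj_outer psd_outer trace_outer_eq_1_iff)
    ultimately show ?thesis by (simp add: couplings_def v'_outer)
  qed
  ultimately show ?thesis unfolding v'_outer y_outer by blast
qed

subsection \<open>Pure qubit states\<close>

lemma rank_0_complex: "rank (0::complex^'n^'m) = 0"
  unfolding row_rank_def_gen by (auto simp add: rows_def row_def vec_eq_iff)

lemma rank_mat1_complex: "rank (mat 1::complex^'n^'n) = CARD('n)"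
proof -
  have "rows (mat 1::complex^'n^'n) = cart_basis"
    unfolding rows_def row_def cart_basis_def by (auto simp: mat_def axis_def vec_eq_iff)
  then show ?thesis
    unfolding row_rank_def_gen by (metis vec.dim_span span_cart_basis vec_dim_card)
qed

lemma hermitian2_entries:
  assumes "adj A = (A::op2)"
  shows "A $ 1 $ 1 = of_real (Re (A $ 1 $ 1))" "A $ 2 $ 2 = of_real (Re (A $ 2 $ 2))"
    "A $ 2 $ 1 = cnj (A $ 1 $ 2)"
  using adj_entry[OF assms, of 1 1] adj_entry[OF assms, of 2 2] adj_entry[OF assms, of 2 1]
  by (simp_all add: complex_eq_iff)

lemma mat2_eqI:
  "(\<And>i j. i \<in> {1, 2} \<Longrightarrow> j \<in> {1, 2} \<Longrightarrow> A $ i $ j = B $ i $ j) \<Longrightarrow> A = (B::op2)"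
  unfolding vec_eq_iff using exhaust_2 by blast

lemma hermitian2_idempotent:
  fixes \<rho> :: op2
  assumes "adj \<rho> = \<rho>" and "\<rho> ** \<rho> = \<rho>"
  defines "a \<equiv> Re (\<rho> $ 1 $ 1)" and "d \<equiv> Re (\<rho> $ 2 $ 2)" and "z \<equiv> \<rho> $ 1 $ 2"
  shows "a\<^sup>2 + (cmod z)\<^sup>2 = a" and "d\<^sup>2 + (cmod z)\<^sup>2 = d" and "z * of_real (a + d) = z"
proof -
  note entries = hermitian2_entries[OF assms(1), folded a_def d_def z_def]
  have zz: "z * cnj z = of_real ((cmod z)\<^sup>2)" and "cnj z * z = of_real ((cmod z)\<^sup>2)"
    using complex_norm_square[of z] by simp_all
  have "(\<rho> ** \<rho>) $ 1 $ 1 = \<rho> $ 1 $ 1" "(\<rho> ** \<rho>) $ 2 $ 2 = \<rho> $ 2 $ 2"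
    "(\<rho> ** \<rho>) $ 1 $ 2 = \<rho> $ 1 $ 2"
    using assms(2) by simp_all
  then have "of_real (a\<^sup>2 + (cmod z)\<^sup>2) = (of_real a :: complex)"
    and "of_real (d\<^sup>2 + (cmod z)\<^sup>2) = (of_real d :: complex)"
    and "z * of_real (a + d) = z"
    by (simp_all add: matrix_matrix_mult_def sum_2 entries z_def[symmetric] zz
        power2_eq_square algebra_simps)
  then show "a\<^sup>2 + (cmod z)\<^sup>2 = a" and "d\<^sup>2 + (cmod z)\<^sup>2 = d" and "z * of_real (a + d) = z"
    by (simp_all only: of_real_eq_iff)
qed

lemma pure_state_diagonal_sum:
  assumes "pure_state \<rho>"
  shows "Re (\<rho> $ 1 $ 1) + Re (\<rho> $ 2 $ 2) = 1"
proof -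
  have herm: "adj \<rho> = \<rho>" and idem: "\<rho> ** \<rho> = \<rho>" and rank: "rank \<rho> = 1"
    using assms unfolding pure_state_def by auto
  define a d z where "a = Re (\<rho> $ 1 $ 1)" and "d = Re (\<rho> $ 2 $ 2)" and "z = \<rho> $ 1 $ 2"
  note eqs = hermitian2_idempotent[OF herm idem, folded a_def d_def z_def]
  note entries = hermitian2_entries[OF herm, folded a_def d_def z_def]
  show ?thesis
  proof (cases "z = 0")
    case False
    then have "of_real (a + d) = (1::complex)"
      using eqs(3) by (metis mult.right_neutral mult_left_cancel)
    then show ?thesis unfolding a_def d_def by (metis of_real_eq_1_iff)
  next
    case True
    then have "a = 0 \<or> a = 1" "d = 0 \<or> d = 1"
      using eqs(1,2) by (simp_all add: power2_eq_square mult_eq_self_implies_10 flip: a_def d_def)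
    moreover have "\<rho> \<noteq> 0" using rank by (metis rank_0_complex zero_neq_one)
    moreover have "\<rho> \<noteq> mat 1" using rank rank_mat1_complex[where 'n=2] by auto
    moreover have "\<rho> = 0" if "a = 0" "d = 0"
      using True that by (intro mat2_eqI) (auto simp: entries z_def[symmetric])
    moreover have "\<rho> = mat 1" if "a = 1" "d = 1"
      using True that by (intro mat2_eqI) (auto simp: entries z_def[symmetric] mat_def)
    ultimately show ?thesis unfolding a_def d_def by auto
  qed
qed

lemma pure_state_outer:
  assumes "pure_state \<rho>"
  obtains u where "norm u = 1" and "\<rho> = outer u"
proof -
  have herm: "adj \<rho> = \<rho>" and idem: "\<rho> ** \<rho> = \<rho>"
    using assms unfolding pure_state_def by auto
  define a d z where "a = Re (\<rho> $ 1 $ 1)" and "d = Re (\<rho> $ 2 $ 2)" and "z = \<rho> $ 1 $ 2"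
  note eqs = hermitian2_idempotent[OF herm idem, folded a_def d_def z_def]
  note entries = hermitian2_entries[OF herm, folded a_def d_def z_def]
  have tr: "a + d = 1" using pure_state_diagonal_sum[OF assms] unfolding a_def d_def .
  have "\<exists>u. \<rho> = outer u"
  proof (cases "a = 0")
    case True
    then have "z = 0" using eqs(1) by simp
    have "\<rho> = outer (axis 2 1)"
      using True tr \<open>z = 0\<close>
      by (intro mat2_eqI) (auto simp: outer_def axis_def entries z_def[symmetric])
    then show ?thesis ..
  next
    case False
    have "a = a\<^sup>2 + (cmod z)\<^sup>2" using eqs(1) by simp
    then have "a > 0" using False by (smt (verit) zero_le_power2)
    define s where "s = sqrt a"
    have s: "s * s = a" "s \<noteq> 0" using \<open>a > 0\<close> unfolding s_def by auto
    have "(cmod z)\<^sup>2 = a * (1 - a)" using eqs(1) by (simp add: algebra_simps power2_eq_square)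
    moreover have "d = 1 - a" using tr by simp
    ultimately have d: "d = (cmod z)\<^sup>2 / a" using \<open>a > 0\<close> by simp
    define u :: "complex^2" where "u = (\<chi> i. if i = 1 then of_real s else cnj z / of_real s)"
    have "\<rho> = outer u"
    proof (intro mat2_eqI)
      have "outer u $ 2 $ 2 = of_real ((cmod z)\<^sup>2 / (s * s))"
        using complex_norm_square[of z] by (simp add: outer_def u_def mult.commute)
      then show "\<rho> $ i $ j = outer u $ i $ j" if "i \<in> {1, 2}" "j \<in> {1, 2}" for i j
        using that s by (auto simp: outer_def u_def entries z_def[symmetric] d
            simp flip: of_real_mult)
    qed
    then show ?thesis ..
  qed
  then obtain u where u: "\<rho> = outer u" ..
  have "trace (outer u) = 1"
    using tr unfolding u[symmetric] by (simp add: trace_def sum_2 entries flip: of_real_add)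
  then show ?thesis using that u by (simp add: trace_outer_eq_1_iff)
qed

lemma trace_pure_state: "pure_state \<rho> \<Longrightarrow> trace \<rho> = 1"
  by (metis pure_state_outer trace_outer_eq_1_iff)

subsection \<open>The symmetric cost\<close>

text \<open>\<open>C\<^sub>s\<^sub>y\<^sub>m = 8 I - 4 |\<Omega>\<rangle>\<langle>\<Omega>|\<close> with the unnormalised maximally entangled vector
  \<open>\<Omega> = \<Sum>\<^sub>i e\<^sub>i \<otimes> e\<^sub>i\<^sup>*\<close>.\<close>
lemma Csym_eq:
  "Csym = (\<chi> p q. (if p = q then 8 else 0) - (if fst p = snd p \<and> fst q = snd q then 4 else 0))"
  unfolding Csym_def Let_def
  by (simp add: vec_eq_iff split_paired_All forall_2 matrix_matrix_mult_def kron_def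
      transpose_def mat_def pauli_def sum_UNIV_prod sum_2)

lemma trace_kron_transpose_Csym:
  "trace (kron A (transpose B) ** Csym) = 8 * trace A * trace B - 4 * trace (A ** B)"
  by (simp add: trace_def matrix_matrix_mult_def Csym_eq kron_def transpose_def sum_UNIV_prod
      sum_2 algebra_simps)

lemma Dsym2_pure:
  assumes "pure_state \<rho>" and "pure_state \<omega>"
  shows "Dsym2 \<rho> \<omega> = 8 - 4 * Re (trace (\<rho> ** \<omega>))"
proof -
  obtain v where v: "norm v = 1" "\<rho> = outer v" using pure_state_outer[OF assms(1)] .
  obtain u where u: "norm u = 1" "\<omega> = outer u" using pure_state_outer[OF assms(2)] .
  have "Dsym2 \<rho> \<omega> = Re (trace (kron \<omega> (transpose \<rho>) ** Csym))"
    unfolding Dsym2_def v(2) u(2) couplings_outer[OF u(1) v(1)] by simp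
  also have "\<dots> = 8 - 4 * Re (trace (\<rho> ** \<omega>))"
    using trace_pure_state[OF assms(1)] trace_pure_state[OF assms(2)]
    by (simp add: trace_kron_transpose_Csym trace_mul_sym[of \<omega> \<rho>])
  finally show ?thesis .
qed

lemma inner_bloch:
  assumes "adj A = A" and "adj B = B"
  shows "bloch A \<bullet> bloch B = 2 * Re (trace (A ** B)) - Re (trace A) * Re (trace B)"
proof -
  have "Im (A $ i $ i) = 0" "Im (B $ i $ i) = 0" for i
    using adj_entry[OF assms(1), of i i] adj_entry[OF assms(2), of i i]
    by (simp_all add: complex_eq_iff)
  then show ?thesis
    using adj_entry[OF assms(1), of 2 1] adj_entry[OF assms(2), of 2 1]
    by (simp add: inner_vec_def sum_3 bloch_def pauli_def trace_def matrix_matrix_mult_def sum_2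
        algebra_simps)
qed

theorem mainTheorem3:
  fixes \<rho> \<omega> :: op2
  assumes "pure_state \<rho>" and "pure_state \<omega>"
  shows "Dsym2 \<rho> \<omega> = 6 - 2 * (bloch \<rho> \<bullet> bloch \<omega>)
     \<and> Dsym2 \<rho> \<rho> = 4
     \<and> dsym \<rho> \<omega> = norm (bloch \<rho> - bloch \<omega>)"
proof -
  have tr: "trace \<rho> = 1" "trace \<omega> = 1" using assms by (simp_all add: trace_pure_state)
  have herm: "adj \<rho> = \<rho>" "adj \<omega> = \<omega>" and idem: "\<rho> ** \<rho> = \<rho>" "\<omega> ** \<omega> = \<omega>"
    using assms unfolding pure_state_def by auto
  have D: "Dsym2 \<rho> \<omega> = 6 - 2 * (bloch \<rho> \<bullet> bloch \<omega>)"
    using Dsym2_pure[OF assms] inner_bloch[OF herm] tr by simp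
  have D_self: "Dsym2 \<rho> \<rho> = 4" "Dsym2 \<omega> \<omega> = 4"
    using Dsym2_pure assms idem tr by auto
  have unit: "bloch \<rho> \<bullet> bloch \<rho> = 1" "bloch \<omega> \<bullet> bloch \<omega> = 1"
    using inner_bloch herm idem tr by auto
  have "dsym \<rho> \<omega> = sqrt (2 - 2 * (bloch \<rho> \<bullet> bloch \<omega>))"
    unfolding dsym_def D D_self by simp
  also have "\<dots> = norm (bloch \<rho> - bloch \<omega>)"
    unfolding norm_eq_sqrt_inner by (simp add: inner_diff_left inner_diff_right unit inner_commute)
  finally show ?thesis using D D_self by simp
qed

end
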